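(* For all $n\ge1$, $$\mathbf{Sf}_{n,1}(p,q)=q^{n-1}\qquad\text{and}\qquad \mathbf{cf}_{n,1}(p,q)=\prod_{i=1}^{n-1}F_i(p,q).$$ For all $n\ge2$, $$\mathbf{Sf}_{n,2}(p,q)=q^{n-2}[n-1]_q\qquad\text{and}\qquad \mathbf{cf}_{n,n-1}(p,q)=\mathbf{Sf}_{n,n-1}(p,q)=\sum_{i=1}^{n-1}F_i(p,q).$$
   Context: $F_1(p,q)=q$, $F_2(p,q)=q^2$ and $F_m(p,q)=qF_{m-1}(p,q)+pF_{m-2}(p,q)$ for $m\ge3$. Let $(x)_{\downarrow_{F,p,q,0}}=(x)_{\uparrow_{F,p,q,0}}=1$ and for $k\ge1$, $(x)_{\downarrow_{F,p,q,k}}=x(x-F_1(p,q))\cdots(x-F_{k-1}(p,q))$ and $(x)_{\uparrow_{F,p,q,k}}=x(x+F_1(p,q))\cdots(x+F_{k-1}(p,q))$. Define $\mathbf{Sf}_{n,k}(p,q)$ and $\mathbf{cf}_{n,k}(p,q)$ for $0\le k\le n$ by $x^n=\sum_{k=0}^n\mathbf{Sf}_{n,k}(p,q)(x)_{\downarrow_{F,p,q,k}}$ and $(x)_{\uparrow_{F,p,q,n}}=\sum_{k=0}^n\mathbf{cf}_{n,k}(p,q)x^k$. For $m\ge1$, $[m]_q=1+q+\cdots+q^{m-1}$. *)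

theory Defs
  imports "HOL-Computational_Algebra.Polynomial"
begin

text \<open>Fibonacci-type polynomials F_m(p,q); F 0 is an auxiliary value (unused).\<close>
fun F :: "nat \<Rightarrow> 'a::comm_ring_1 \<Rightarrow> 'a \<Rightarrow> 'a" where
  "F 0 p q = 0"
| "F (Suc 0) p q = q"
| "F (Suc (Suc 0)) p q = q ^ 2"
| "F (Suc (Suc (Suc m))) p q = q * F (Suc (Suc m)) p q + p * F (Suc m) p q"

definition falling :: "'a::comm_ring_1 \<Rightarrow> 'a \<Rightarrow> nat \<Rightarrow> 'a poly" where
  "falling p q k = (if k = 0 then 1
     else [:0, 1:] * (\<Prod>i\<in>{1..<k}. [:- F i p q, 1:]))"

definition rising :: "'a::comm_ring_1 \<Rightarrow> 'a \<Rightarrow> nat \<Rightarrow> 'a poly" where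
  "rising p q k = (if k = 0 then 1
     else [:0, 1:] * (\<Prod>i\<in>{1..<k}. [:F i p q, 1:]))"

definition Sf :: "nat \<Rightarrow> nat \<Rightarrow> 'a::comm_ring_1 \<Rightarrow> 'a \<Rightarrow> 'a" where
  "Sf n k p q = (THE c :: nat \<Rightarrow> 'a. (\<forall>j>n. c j = 0) \<and>
      monom 1 n = (\<Sum>j\<le>n. smult (c j) (falling p q j))) k"

definition cf :: "nat \<Rightarrow> nat \<Rightarrow> 'a::comm_ring_1 \<Rightarrow> 'a \<Rightarrow> 'a" where
  "cf n k p q = coeff (rising p q n) k"

definition qint :: "nat \<Rightarrow> 'a::comm_ring_1 \<Rightarrow> 'a" where
  "qint m q = (\<Sum>i<m. q ^ i)"

end

theory Submission
  imports Defs
begin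

text \<open>
  Both factorial polynomials grow by monic linear factors, so their coefficients obey
  first-order recurrences. Multiplying the expansion of x^n by x = (x - F k) + F k shows
  that Sf satisfies the triangular recurrence Sf (n+1) k = Sf n (k-1) + F k * Sf n k
  (the expansion is unique because the falling factorials form a unitriangular basis),
  and likewise cf (n+1) k = F n * cf n k + cf n (k-1).
\<close>

lemma coeff_mult_monic_linear_Suc:
  fixes P :: "'a::comm_ring_1 poly"
  shows "coeff (P * [:a, 1:]) (Suc i) = a * coeff P (Suc i) + coeff P i"
proof -
  have "P * [:a, 1:] = smult a P + pCons 0 P" by (simp add: mult_pCons_right)
  then show ?thesis by simp
qed

lemma coeff_mult_monic_linear_0:
  fixes P :: "'a::comm_ring_1 poly"
  shows "coeff (P * [:a, 1:]) 0 = a * coeff P 0"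
  by (simp add: mult_pCons_right)

lemma monic_mult_monic_linear:
  fixes P :: "'a::comm_ring_1 poly"
  assumes "coeff P k = 1" and "\<forall>i>k. coeff P i = 0"
  shows "coeff (P * [:a, 1:]) (Suc k) = 1 \<and> (\<forall>i>Suc k. coeff (P * [:a, 1:]) i = 0)"
  using assms by (auto simp: coeff_mult_monic_linear_Suc gr0_conv_Suc dest!: less_imp_Suc_add)

text \<open>Compare coefficients from the top degree n downwards.\<close>
lemma unitriangular_combination_eq_0:
  fixes b :: "nat \<Rightarrow> 'a::comm_ring_1 poly"
  assumes top: "\<And>j. coeff (b j) j = 1"
    and above: "\<And>i j. j < i \<Longrightarrow> coeff (b j) i = 0"
    and zero: "(\<Sum>j\<le>n. smult (e j) (b j)) = 0"
  shows "\<forall>j\<le>n. e j = 0"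
  using zero
proof (induction n)
  case 0
  then have "coeff (smult (e 0) (b 0)) 0 = 0" by simp
  then show ?case using top[of 0] by simp
next
  case (Suc n)
  have "coeff (\<Sum>j\<le>Suc n. smult (e j) (b j)) (Suc n)
      = (\<Sum>j\<le>n. e j * coeff (b j) (Suc n)) + e (Suc n)"
    by (simp add: coeff_sum top)
  also have "(\<Sum>j\<le>n. e j * coeff (b j) (Suc n)) = 0"
    by (rule sum.neutral) (simp add: above le_imp_less_Suc)
  finally have "coeff (\<Sum>j\<le>Suc n. smult (e j) (b j)) (Suc n) = e (Suc n)" by simp
  then have last: "e (Suc n) = 0" unfolding Suc.prems by simp
  then have "\<forall>j\<le>n. e j = 0" using Suc by simp
  then show ?case using last le_Suc_eq by auto
qed

lemma falling_Suc: "falling p q (Suc k) = falling p q k * [:- F k p q, 1:]"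
proof (cases k)
  case (Suc m)
  have "{1..<Suc (Suc m)} = insert (Suc m) {1..<Suc m}" by auto
  then show ?thesis using Suc by (simp add: falling_def mult.assoc)
qed (simp add: falling_def)

lemma rising_Suc: "rising p q (Suc k) = rising p q k * [:F k p q, 1:]"
proof (cases k)
  case (Suc m)
  have "{1..<Suc (Suc m)} = insert (Suc m) {1..<Suc m}" by auto
  then show ?thesis using Suc by (simp add: rising_def mult.assoc)
qed (simp add: rising_def)

lemma monic_falling: "coeff (falling p q k) k = 1 \<and> (\<forall>i>k. coeff (falling p q k) i = 0)"
proof (induction k)
  case 0
  then show ?case by (simp add: falling_def coeff_1)
next
  case (Suc k)
  then show ?case unfolding falling_Suc by (intro monic_mult_monic_linear) auto
qed

lemma monic_rising: "coeff (rising p q k) k = 1 \<and> (\<forall>i>k. coeff (rising p q k) i = 0)"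
proof (induction k)
  case 0
  then show ?case by (simp add: rising_def coeff_1)
next
  case (Suc k)
  then show ?case unfolding rising_Suc by (intro monic_mult_monic_linear) auto
qed

lemma x_times_falling:
  "[:0, 1:] * falling p q j = falling p q (Suc j) + smult (F j p q) (falling p q j)"
  by (simp add: falling_Suc algebra_simps mult_pCons_right)

fun stirlingF :: "nat \<Rightarrow> nat \<Rightarrow> 'a::comm_ring_1 \<Rightarrow> 'a \<Rightarrow> 'a" where
  "stirlingF 0 k p q = (if k = 0 then 1 else 0)"
| "stirlingF (Suc n) 0 p q = 0"
| "stirlingF (Suc n) (Suc k) p q = stirlingF n k p q + F (Suc k) p q * stirlingF n (Suc k) p q"

lemma stirlingF_eq_0: "n < j \<Longrightarrow> stirlingF n j p q = 0"
proof (induction n arbitrary: j)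
  case (Suc n)
  then obtain k where "j = Suc k" "n < k" by (cases j) auto
  then show ?case using Suc by simp
qed simp

lemma stirlingF_Suc:
  "stirlingF (Suc n) j p q = (if j = 0 then 0 else stirlingF n (j - 1) p q) + F j p q * stirlingF n j p q"
  by (cases j) auto

lemma monom_eq_sum_stirlingF_falling:
  fixes p q :: "'a::comm_ring_1"
  shows "monom 1 n = (\<Sum>j\<le>n. smult (stirlingF n j p q) (falling p q j))"
proof (induction n)
  case 0
  then show ?case by (simp add: falling_def monom_0 one_pCons)
next
  case (Suc n)
  let ?S = "\<lambda>j. stirlingF n j p q"
  have "monom (1::'a) (Suc n) = [:0, 1:] * monom 1 n"
    by (simp add: monom_Suc mult_pCons_left)
  also have "\<dots> = (\<Sum>j\<le>n. smult (?S j) ([:0, 1:] * falling p q j))"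
    by (simp add: Suc sum_distrib_left mult_smult_right)
  also have "\<dots> = (\<Sum>j\<le>n. smult (?S j) (falling p q (Suc j)))
      + (\<Sum>j\<le>n. smult (F j p q * ?S j) (falling p q j))"
  proof -
    have "smult (?S j) ([:0, 1:] * falling p q j)
        = smult (?S j) (falling p q (Suc j)) + smult (F j p q * ?S j) (falling p q j)" for j
      by (subst x_times_falling) (simp add: smult_add_right mult.commute)
    then show ?thesis by (simp only: sum.distrib)
  qed
  also have "(\<Sum>j\<le>n. smult (?S j) (falling p q (Suc j)))
      = (\<Sum>j\<le>Suc n. smult (if j = 0 then 0 else ?S (j - 1)) (falling p q j))"
    by (subst sum.atMost_Suc_shift) simp
  also have "(\<Sum>j\<le>n. smult (F j p q * ?S j) (falling p q j))
      = (\<Sum>j\<le>Suc n. smult (F j p q * ?S j) (falling p q j))"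
    by (simp add: stirlingF_eq_0)
  finally show ?case
    by (simp add: stirlingF_Suc smult_add_left sum.distrib del: stirlingF.simps)
qed

lemma Sf_eq_stirlingF: "Sf n k p q = stirlingF n k p q"
proof -
  let ?P = "\<lambda>c :: nat \<Rightarrow> 'a. (\<forall>j>n. c j = 0) \<and>
      monom 1 n = (\<Sum>j\<le>n. smult (c j) (falling p q j))"
  have "?P (\<lambda>j. stirlingF n j p q)"
    using stirlingF_eq_0 monom_eq_sum_stirlingF_falling by blast
  moreover have "c = (\<lambda>j. stirlingF n j p q)" if "?P c" for c
  proof
    fix j
    have difference: "(\<Sum>j\<le>n. smult (c j - stirlingF n j p q) (falling p q j)) = 0"
      using that monom_eq_sum_stirlingF_falling[of n p q]
      by (simp add: smult_diff_left sum_subtractf)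
    have "\<forall>j\<le>n. c j - stirlingF n j p q = 0"
      using monic_falling by (intro unitriangular_combination_eq_0[OF _ _ difference]) auto
    then show "c j = stirlingF n j p q"
      using that stirlingF_eq_0[of n j p q] by (cases "j \<le> n") auto
  qed
  ultimately have "(THE c. ?P c) = (\<lambda>j. stirlingF n j p q)" by (rule the_equality)
  then show ?thesis unfolding Sf_def by simp
qed

lemma stirlingF_diag: "stirlingF n n p q = 1"
  by (induction n) (auto simp: stirlingF_eq_0)

lemma stirlingF_1: "stirlingF (Suc n) 1 p q = q ^ n"
  by (induction n) auto

lemma stirlingF_2: "stirlingF (Suc (Suc n)) 2 p q = q ^ n * qint (Suc n) q"
proof (induction n)
  case 0
  then show ?case by (simp add: qint_def numeral_2_eq_2 stirlingF_diag)
next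
  case (Suc n)
  have "stirlingF (Suc (Suc (Suc n))) 2 p q
      = stirlingF (Suc (Suc n)) 1 p q + F 2 p q * stirlingF (Suc (Suc n)) 2 p q"
    by (simp add: numeral_2_eq_2)
  also have "\<dots> = q ^ Suc n + q\<^sup>2 * (q ^ n * qint (Suc n) q)"
    using Suc by (simp only: stirlingF_1) (simp add: numeral_2_eq_2)
  also have "\<dots> = q ^ Suc n * qint (Suc (Suc n)) q"
    unfolding qint_def
    by (subst (2) sum.lessThan_Suc_shift) (simp add: algebra_simps power2_eq_square sum_distrib_left)
  finally show ?case .
qed

lemma stirlingF_subdiag: "stirlingF (Suc m) m p q = (\<Sum>i=1..m. F i p q)"
  by (induction m) (simp_all add: stirlingF_diag add.commute)

lemma coeff_rising_0: "coeff (rising p q (Suc n)) 0 = 0"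
  by (induction n) (simp_all add: rising_def rising_Suc coeff_mult_monic_linear_0)

lemma coeff_rising_Suc:
  "coeff (rising p q (Suc n)) (Suc i) = F n p q * coeff (rising p q n) (Suc i) + coeff (rising p q n) i"
  by (simp only: rising_Suc coeff_mult_monic_linear_Suc)

lemma coeff_rising_1: "coeff (rising p q (Suc n)) 1 = (\<Prod>i=1..n. F i p q)"
  by (induction n) (simp_all add: rising_def coeff_rising_Suc[where i = 0, simplified]
      coeff_rising_0 mult.commute)

lemma coeff_rising_subdiag: "coeff (rising p q (Suc m)) m = (\<Sum>i=1..m. F i p q)"
proof (induction m)
  case 0
  then show ?case using coeff_rising_0[of p q 0] by simp
next
  case (Suc m)
  then show ?case
    using coeff_rising_Suc[of p q "Suc m" m] monic_rising[of p q "Suc m"] by (simp add: add.commute)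
qed

theorem theorem9:
  fixes p q :: "'a::comm_ring_1"
  shows "(\<forall>n\<ge>1. Sf n 1 p q = q ^ (n - 1) \<and> cf n 1 p q = (\<Prod>i=1..n-1. F i p q))
       \<and> (\<forall>n\<ge>2. Sf n 2 p q = q ^ (n - 2) * qint (n - 1) q
               \<and> cf n (n - 1) p q = Sf n (n - 1) p q
               \<and> Sf n (n - 1) p q = (\<Sum>i=1..n-1. F i p q))"
proof (intro conjI allI impI)
  fix n :: nat
  assume "n \<ge> 1"
  then obtain m where n: "n = Suc m" by (cases n) auto
  show "Sf n 1 p q = q ^ (n - 1)" by (simp only: n Sf_eq_stirlingF stirlingF_1 diff_Suc_1)
  show "cf n 1 p q = (\<Prod>i=1..n-1. F i p q)" using coeff_rising_1 by (simp add: n cf_def)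
next
  fix n :: nat
  assume "n \<ge> 2"
  then obtain m where n: "n = Suc (Suc m)" by (metis add_2_eq_Suc le_Suc_ex)
  show "Sf n 2 p q = q ^ (n - 2) * qint (n - 1) q" by (simp add: n Sf_eq_stirlingF stirlingF_2)
  show "Sf n (n - 1) p q = (\<Sum>i=1..n-1. F i p q)"
    by (simp add: n Sf_eq_stirlingF stirlingF_subdiag)
  then show "cf n (n - 1) p q = Sf n (n - 1) p q"
    by (simp add: n cf_def coeff_rising_subdiag)
qed

end
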